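(* Let $X$ be a fibrewise pointed space over $B$. Then $\mathrm{TC}_B(X)=0$ if and only if $X$ is fibrewise homotopy equivalent to $B$ (where $B$ is regarded as a fibrewise space over itself via the identity).
   Context: A fibrewise space over $B$ is a space $X$ with a map $p_X:X\to B$; fibrewise maps satisfy $p_Y\circ f=p_X$; fibrewise homotopies $H:X\times I\to Y$ satisfy $p_Y(H(x,t))=p_X(x)$, written $\simeq_B$. A fibrewise pointed space is a fibrewise space $X$ with a map $s_X:B\to X$ such that $p_X\circ s_X=1_B$. For a fibrewise map $f:E\to X$, an open $U\subseteq X$ is fibrewise sectional if there is a fibrewise map $s:U\to E$ with $f\circ s\simeq_B$ the inclusion; $\mathrm{secat}_B(f)$ is the least $k$ such that $X$ is covered by $k+1$ such open sets. $X\times_BX=\{(x,y):p_X(x)=p_X(y)\}$; $P_B(X)=\{(b,\alpha)\in B\times X^I: p_X\circ\alpha\equiv b\}$ with projection $(b,\alpha)\mapsto b$; $\Pi_X(b,\alpha)=(\alpha(0),\alpha(1))$; $\mathrm{TC}_B(X):=\mathrm{secat}_B(\Pi_X)$. *)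

theory Defs
  imports "HOL-Analysis.Analysis"
begin

abbreviation unit_interval :: "real topology" where
  "unit_interval \<equiv> top_of_set {0..1}"

definition fw_map :: "'a topology \<Rightarrow> ('a \<Rightarrow> 'b) \<Rightarrow> 'c topology \<Rightarrow> ('c \<Rightarrow> 'b) \<Rightarrow> ('a \<Rightarrow> 'c) \<Rightarrow> bool" where
  "fw_map X pX Y pY f \<longleftrightarrow> continuous_map X Y f \<and> (\<forall>x\<in>topspace X. pY (f x) = pX x)"

definition fw_homotopic :: "'a topology \<Rightarrow> ('a \<Rightarrow> 'b) \<Rightarrow> 'c topology \<Rightarrow> ('c \<Rightarrow> 'b) \<Rightarrow> ('a \<Rightarrow> 'c) \<Rightarrow> ('a \<Rightarrow> 'c) \<Rightarrow> bool" where
  "fw_homotopic X pX Y pY f g \<longleftrightarrow>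
     (\<exists>H. continuous_map (prod_topology X unit_interval) Y H \<and>
          (\<forall>x\<in>topspace X. \<forall>t\<in>{0..1}. pY (H (x, t)) = pX x) \<and>
          (\<forall>x\<in>topspace X. H (x, 0) = f x \<and> H (x, 1) = g x))"

definition fw_homotopy_equivalent :: "'a topology \<Rightarrow> ('a \<Rightarrow> 'b) \<Rightarrow> 'c topology \<Rightarrow> ('c \<Rightarrow> 'b) \<Rightarrow> bool" where
  "fw_homotopy_equivalent X pX Y pY \<longleftrightarrow>
     (\<exists>f g. fw_map X pX Y pY f \<and> fw_map Y pY X pX g \<and>
            fw_homotopic X pX X pX (g \<circ> f) id \<and> fw_homotopic Y pY Y pY (f \<circ> g) id)"

definition fw_pointed :: "'b topology \<Rightarrow> 'a topology \<Rightarrow> ('a \<Rightarrow> 'b) \<Rightarrow> ('b \<Rightarrow> 'a) \<Rightarrow> bool" where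
  "fw_pointed B X p s \<longleftrightarrow> continuous_map X B p \<and> continuous_map B X s \<and>
     (\<forall>b\<in>topspace B. p (s b) = b)"

definition fw_sectional :: "'e topology \<Rightarrow> ('e \<Rightarrow> 'b) \<Rightarrow> 'a topology \<Rightarrow> ('a \<Rightarrow> 'b) \<Rightarrow> ('e \<Rightarrow> 'a) \<Rightarrow> 'a set \<Rightarrow> bool" where
  "fw_sectional E pE X pX f U \<longleftrightarrow> openin X U \<and>
     (\<exists>s. fw_map (subtopology X U) pX E pE s \<and>
          fw_homotopic (subtopology X U) pX X pX (f \<circ> s) id)"

text \<open>Fibrewise sectional category (as an extended natural; \<infinity> if no finite cover exists).\<close>
definition fw_secat :: "'e topology \<Rightarrow> ('e \<Rightarrow> 'b) \<Rightarrow> 'a topology \<Rightarrow> ('a \<Rightarrow> 'b) \<Rightarrow> ('e \<Rightarrow> 'a) \<Rightarrow> enat" where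
  "fw_secat E pE X pX f =
     (INF k \<in> {k. \<exists>U :: nat \<Rightarrow> 'a set. (\<forall>i\<le>k. fw_sectional E pE X pX f (U i)) \<and>
                                     topspace X \<subseteq> (\<Union>i\<le>k. U i)}. enat k)"

text \<open>Compact-open topology on the space of paths I \<rightarrow> X (paths extensional outside [0,1]).\<close>
definition path_fun_space :: "'a topology \<Rightarrow> (real \<Rightarrow> 'a) topology" where
  "path_fun_space X =
     topology_generated_by
       {{\<alpha>. continuous_map unit_interval X \<alpha> \<and> \<alpha> \<in> extensional {0..1} \<and> \<alpha> ` K \<subseteq> U} | K U.
          compactin unit_interval K \<and> openin X U}"

definition fw_path_space :: "'b topology \<Rightarrow> 'a topology \<Rightarrow> ('a \<Rightarrow> 'b) \<Rightarrow> ('b \<times> (real \<Rightarrow> 'a)) topology" where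
  "fw_path_space B X p =
     subtopology (prod_topology B (path_fun_space X)) {(b, \<alpha>). \<forall>t\<in>{0..1}. p (\<alpha> t) = b}"

definition fw_fibre_product :: "'a topology \<Rightarrow> ('a \<Rightarrow> 'b) \<Rightarrow> ('a \<times> 'a) topology" where
  "fw_fibre_product X p = subtopology (prod_topology X X) {(x, y). p x = p y}"

definition fw_Pi :: "'b \<times> (real \<Rightarrow> 'a) \<Rightarrow> 'a \<times> 'a" where
  "fw_Pi = (\<lambda>(b, \<alpha>). (\<alpha> 0, \<alpha> 1))"

definition fw_TC :: "'b topology \<Rightarrow> 'a topology \<Rightarrow> ('a \<Rightarrow> 'b) \<Rightarrow> enat" where
  "fw_TC B X p = fw_secat (fw_path_space B X p) fst (fw_fibre_product X p) (p \<circ> fst) fw_Pi"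

end

theory Submission
  imports Defs
begin

(* TC_B(X) = 0 says that all of X \<times>_B X is fibrewise sectional for \<Pi>_X. By the exponential law
   for the compact-open topology on paths, a fibrewise section of \<Pi>_X up to fibrewise homotopy
   is the same as a fibrewise homotopy between the two projections X \<times>_B X \<rightarrow> X.
   If g is a fibrewise homotopy inverse of p, then fst \<simeq> g p fst = g p snd \<simeq> snd. Conversely,
   precomposing a homotopy fst \<simeq> snd with x \<mapsto> (s (p x), x) deforms s \<circ> p into the identity,
   while p \<circ> s is the identity already. *)

definition fibre_preserving :: "'a topology \<Rightarrow> ('a \<Rightarrow> 'b) \<Rightarrow> ('c \<Rightarrow> 'b) \<Rightarrow> ('a \<Rightarrow> 'c) \<Rightarrow> bool" where
  "fibre_preserving X pX pY h \<longleftrightarrow> (\<forall>x\<in>topspace X. pY (h x) = pX x)"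

lemma fw_map_iff_fibre_preserving:
  "fw_map X pX Y pY f \<longleftrightarrow> continuous_map X Y f \<and> fibre_preserving X pX pY f"
  by (simp add: fw_map_def fibre_preserving_def)

lemma fibre_preserving_compose:
  assumes "continuous_map X Y h" "fibre_preserving X pX pY h" "fibre_preserving Y pY pZ k"
  shows "fibre_preserving X pX pZ (k \<circ> h)"
  using assms continuous_map_image_subset_topspace unfolding fibre_preserving_def by fastforce

lemma continuous_map_swap_args:
  assumes "continuous_map (prod_topology S T) Y H"
  shows "continuous_map (prod_topology T S) Y (\<lambda>(u, v). H (v, u))"
proof -
  have "continuous_map (prod_topology T S) (prod_topology S T) (\<lambda>(u, v). (v, u))"
    by (simp add: case_prod_unfold continuous_map_pairedI continuous_map_fst continuous_map_snd)
  from continuous_map_compose[OF this assms] show ?thesis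
    by (simp add: o_def case_prod_unfold)
qed

lemma fw_homotopic_iff_homotopic_with:
  "fw_homotopic X pX Y pY f g \<longleftrightarrow> homotopic_with (fibre_preserving X pX pY) X Y f g"
proof -
  have "homotopic_with (fibre_preserving X pX pY) X Y f g \<longleftrightarrow>
          (\<exists>h. continuous_map (prod_topology unit_interval X) Y h \<and>
              (\<forall>x \<in> topspace X. h (0, x) = f x) \<and> (\<forall>x \<in> topspace X. h (1, x) = g x) \<and>
              (\<forall>t \<in> {0..1}. fibre_preserving X pX pY (\<lambda>x. h (t, x))))"
    (is "_ \<longleftrightarrow> ?time_first")
    by (rule homotopic_with) (simp add: fibre_preserving_def)
  also have "\<dots> \<longleftrightarrow> fw_homotopic X pX Y pY f g"
  proof
    assume ?time_first
    then obtain h where "continuous_map (prod_topology unit_interval X) Y h"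
      "\<forall>x \<in> topspace X. h (0, x) = f x \<and> h (1, x) = g x"
      "\<forall>t \<in> {0..1}. fibre_preserving X pX pY (\<lambda>x. h (t, x))"
      by blast
    then show "fw_homotopic X pX Y pY f g"
      unfolding fw_homotopic_def fibre_preserving_def
      by (intro exI[of _ "\<lambda>(x, t). h (t, x)"]) (auto intro: continuous_map_swap_args)
  next
    assume "fw_homotopic X pX Y pY f g"
    then obtain H where "continuous_map (prod_topology X unit_interval) Y H"
      "\<forall>x\<in>topspace X. \<forall>t\<in>{0..1}. pY (H (x, t)) = pX x"
      "\<forall>x\<in>topspace X. H (x, 0) = f x \<and> H (x, 1) = g x"
      unfolding fw_homotopic_def by blast
    then show ?time_first
      unfolding fibre_preserving_def
      by (intro exI[of _ "\<lambda>(t, x). H (x, t)"]) (auto intro: continuous_map_swap_args)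
  qed
  finally show ?thesis ..
qed

lemma fw_homotopic_sym: "fw_homotopic X pX Y pY f g \<Longrightarrow> fw_homotopic X pX Y pY g f"
  by (simp add: fw_homotopic_iff_homotopic_with homotopic_with_sym)

lemma fw_homotopic_trans [trans]:
  "fw_homotopic X pX Y pY f g \<Longrightarrow> fw_homotopic X pX Y pY g h \<Longrightarrow> fw_homotopic X pX Y pY f h"
  unfolding fw_homotopic_iff_homotopic_with by (rule homotopic_with_trans)

lemma fw_homotopic_eq:
  assumes "fw_homotopic X pX Y pY f g"
    and "\<And>x. x \<in> topspace X \<Longrightarrow> f' x = f x" and "\<And>x. x \<in> topspace X \<Longrightarrow> g' x = g x"
  shows "fw_homotopic X pX Y pY f' g'"
  using assms unfolding fw_homotopic_iff_homotopic_with
  by (elim homotopic_with_eq) (auto simp: fibre_preserving_def)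

lemma fw_homotopic_equal:
  "fw_map X pX Y pY f \<Longrightarrow> (\<And>x. x \<in> topspace X \<Longrightarrow> f x = g x) \<Longrightarrow> fw_homotopic X pX Y pY f g"
  unfolding fw_homotopic_iff_homotopic_with fw_map_iff_fibre_preserving
  by (rule homotopic_with_equal) (auto simp: fibre_preserving_def)

lemma fw_homotopic_compose_left:
  assumes "fw_homotopic X pX Y pY f g" and "fw_map Y pY Z pZ k"
  shows "fw_homotopic X pX Z pZ (k \<circ> f) (k \<circ> g)"
proof -
  have "homotopic_with (\<lambda>h. continuous_map X Y h \<and> fibre_preserving X pX pY h) X Y f g"
    using assms(1) unfolding fw_homotopic_iff_homotopic_with by (rule homotopic_with_mono) blast
  then show ?thesis
    using assms(2) unfolding fw_homotopic_iff_homotopic_with fw_map_iff_fibre_preserving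
    by (elim homotopic_with_compose_continuous_map_left; use fibre_preserving_compose in blast)
qed

lemma fw_homotopic_compose_right:
  assumes "fw_homotopic X pX Y pY f g" and "fw_map W pW X pX h"
  shows "fw_homotopic W pW Y pY (f \<circ> h) (g \<circ> h)"
  using assms unfolding fw_homotopic_iff_homotopic_with fw_map_iff_fibre_preserving
  by (elim homotopic_with_compose_continuous_map_right; use fibre_preserving_compose in blast)

lemma topspace_path_fun_space:
  "topspace (path_fun_space X) = {\<alpha>. continuous_map unit_interval X \<alpha> \<and> \<alpha> \<in> extensional {0..1}}"
  unfolding path_fun_space_def topology_generated_by_topspace
  by (auto intro!: exI[of _ "{}"] exI[of _ "topspace X"])

lemma openin_path_fun_space_subbasic:
  assumes "compactin unit_interval K" "openin X U"
  shows "openin (path_fun_space X) {\<alpha> \<in> topspace (path_fun_space X). \<alpha> ` K \<subseteq> U}"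
proof -
  have "{\<alpha> \<in> topspace (path_fun_space X). \<alpha> ` K \<subseteq> U} =
          {\<alpha>. continuous_map unit_interval X \<alpha> \<and> \<alpha> \<in> extensional {0..1} \<and> \<alpha> ` K \<subseteq> U}"
    by (auto simp: topspace_path_fun_space)
  then show ?thesis
    unfolding path_fun_space_def by (metis (mono_tags, lifting) assms topology_generated_by_Basis mem_Collect_eq)
qed

lemma continuous_map_into_path_fun_space:
  assumes "f ` topspace Z \<subseteq> topspace (path_fun_space X)"
    and "\<And>K U. compactin unit_interval K \<Longrightarrow> openin X U \<Longrightarrow> openin Z {z \<in> topspace Z. f z ` K \<subseteq> U}"
  shows "continuous_map Z (path_fun_space X) f"
  unfolding path_fun_space_def
proof (rule continuous_on_generated_topo)
  show "f ` topspace Z \<subseteq> \<Union> {{\<alpha>. continuous_map unit_interval X \<alpha> \<and> \<alpha> \<in> extensional {0..1} \<and> \<alpha> ` K \<subseteq> U} | K U.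
          compactin unit_interval K \<and> openin X U}"
    using assms(1) topology_generated_by_topspace unfolding path_fun_space_def by metis
next
  fix W assume "W \<in> {{\<alpha>. continuous_map unit_interval X \<alpha> \<and> \<alpha> \<in> extensional {0..1} \<and> \<alpha> ` K \<subseteq> U} | K U.
          compactin unit_interval K \<and> openin X U}"
  then obtain K U where W: "W = {\<alpha>. continuous_map unit_interval X \<alpha> \<and> \<alpha> \<in> extensional {0..1} \<and> \<alpha> ` K \<subseteq> U}"
    and "compactin unit_interval K" "openin X U" by blast
  moreover have "f -` W \<inter> topspace Z = {z \<in> topspace Z. f z ` K \<subseteq> U}"
    using assms(1) unfolding W topspace_path_fun_space by auto
  ultimately show "openin Z (f -` W \<inter> topspace Z)"
    using assms(2) by simp
qed

lemma continuous_map_path_eval: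
  "continuous_map (prod_topology (path_fun_space X) unit_interval) X (\<lambda>(\<alpha>, t). \<alpha> t)"
proof -
  \<comment> \<open>[0,1] is locally compact, so near a point t of the preimage of V there is a compact K
      with \<alpha> ` K \<subseteq> V, and paths \<beta> with \<beta> ` K \<subseteq> V form a subbasic neighbourhood of \<alpha>.\<close>
  have nbhd_base: "neighbourhood_base_of (compactin unit_interval) unit_interval"
    by (simp add: locally_compact_space_neighbourhood_base[symmetric] compact_imp_locally_compact_space
        Hausdorff_space_subtopology compact_space_subtopology)
  have "openin (prod_topology (path_fun_space X) unit_interval)
          {w \<in> topspace (prod_topology (path_fun_space X) unit_interval). (case w of (\<alpha>, t) \<Rightarrow> \<alpha> t) \<in> V}"
    (is "openin ?PI ?E") if V: "openin X V" for V
  proof (subst openin_subopen, intro ballI)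
    fix w assume "w \<in> ?E"
    then obtain \<alpha> t where w: "w = (\<alpha>, t)" and \<alpha>: "\<alpha> \<in> topspace (path_fun_space X)"
      and t: "t \<in> {0..1}" and "\<alpha> t \<in> V"
      by auto
    have "openin unit_interval {r \<in> topspace unit_interval. \<alpha> r \<in> V}"
      using \<alpha> V openin_continuous_map_preimage unfolding topspace_path_fun_space by blast
    moreover have "t \<in> {r \<in> topspace unit_interval. \<alpha> r \<in> V}"
      using t \<open>\<alpha> t \<in> V\<close> by simp
    ultimately obtain N K where N: "openin unit_interval N" and K: "compactin unit_interval K"
      and "t \<in> N" "N \<subseteq> K" and KV: "K \<subseteq> {r \<in> topspace unit_interval. \<alpha> r \<in> V}"
      using nbhd_base unfolding neighbourhood_base_of by meson
    show "\<exists>T. openin ?PI T \<and> w \<in> T \<and> T \<subseteq> ?E"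
    proof (intro exI conjI)
      show "openin ?PI ({\<beta> \<in> topspace (path_fun_space X). \<beta> ` K \<subseteq> V} \<times> N)"
        using openin_path_fun_space_subbasic[OF K V] N by (simp add: openin_prod_Times_iff)
      show "w \<in> {\<beta> \<in> topspace (path_fun_space X). \<beta> ` K \<subseteq> V} \<times> N"
        using w \<alpha> KV \<open>t \<in> N\<close> by auto
      show "{\<beta> \<in> topspace (path_fun_space X). \<beta> ` K \<subseteq> V} \<times> N \<subseteq> ?E"
        using \<open>N \<subseteq> K\<close> openin_subset[OF N] by auto
    qed
  qed
  moreover have "(\<lambda>(\<alpha>, t). \<alpha> t) \<in> topspace (prod_topology (path_fun_space X) unit_interval) \<rightarrow> topspace X"
    by (auto simp: topspace_path_fun_space continuous_map_def)
  ultimately show ?thesis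
    unfolding continuous_map by blast
qed

lemma continuous_map_path_curry:
  assumes H: "continuous_map (prod_topology Z unit_interval) X H"
  shows "continuous_map Z (path_fun_space X) (\<lambda>z. restrict (\<lambda>t. H (z, t)) {0..1})"
proof (rule continuous_map_into_path_fun_space)
  show "(\<lambda>z. restrict (\<lambda>t. H (z, t)) {0..1}) ` topspace Z \<subseteq> topspace (path_fun_space X)"
  proof -
    have "continuous_map unit_interval X (\<lambda>t\<in>{0..1}. H (z, t))" if "z \<in> topspace Z" for z
    proof (rule continuous_map_eq)
      show "continuous_map unit_interval X (H \<circ> Pair z)"
        using continuous_map_o_Pair[OF H that] .
    qed auto
    then show ?thesis
      by (auto simp: topspace_path_fun_space)
  qed
next
  fix K U assume K: "compactin unit_interval K" and U: "openin X U"
  have K01: "K \<subseteq> {0..1}"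
    using compactin_subset_topspace[OF K] by simp
  have W: "openin (prod_topology Z unit_interval) {w \<in> topspace (prod_topology Z unit_interval). H w \<in> U}"
    using openin_continuous_map_preimage[OF H U] .
  have "openin Z {z \<in> topspace Z. \<forall>t\<in>K. H (z, t) \<in> U}"
  proof (subst openin_subopen, intro ballI)
    fix z assume z: "z \<in> {z \<in> topspace Z. \<forall>t\<in>K. H (z, t) \<in> U}"
    then have zZ: "z \<in> topspace Z"
      and "{z} \<times> K \<subseteq> {w \<in> topspace (prod_topology Z unit_interval). H w \<in> U}"
      using K01 by auto
    then obtain V V' where V: "openin Z V" "z \<in> V"
      and "K \<subseteq> V'" "V \<times> V' \<subseteq> {w \<in> topspace (prod_topology Z unit_interval). H w \<in> U}"
      using tube_lemma_right[OF W K] by meson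
    then have "V \<subseteq> {z \<in> topspace Z. \<forall>t\<in>K. H (z, t) \<in> U}"
      using openin_subset[OF V(1)] by auto
    with V show "\<exists>T. openin Z T \<and> z \<in> T \<and> T \<subseteq> {z \<in> topspace Z. \<forall>t\<in>K. H (z, t) \<in> U}"
      by blast
  qed
  moreover have "{z \<in> topspace Z. restrict (\<lambda>t. H (z, t)) {0..1} ` K \<subseteq> U} = {z \<in> topspace Z. \<forall>t\<in>K. H (z, t) \<in> U}"
    using K01 by (auto simp: image_subset_iff)
  ultimately show "openin Z {z \<in> topspace Z. restrict (\<lambda>t. H (z, t)) {0..1} ` K \<subseteq> U}"
    by simp
qed

lemma topspace_fw_path_space:
  "topspace (fw_path_space B X p) =
     {(b, \<alpha>). b \<in> topspace B \<and> \<alpha> \<in> topspace (path_fun_space X) \<and> (\<forall>t\<in>{0..1}. p (\<alpha> t) = b)}"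
  by (auto simp: fw_path_space_def)

lemma fw_map_path_curry:
  assumes q: "continuous_map Z B q" and "fw_homotopic Z q X p f g"
  obtains \<sigma> where "fw_map Z q (fw_path_space B X p) fst \<sigma>" and "\<And>z. z \<in> topspace Z \<Longrightarrow> fw_Pi (\<sigma> z) = (f z, g z)"
proof -
  obtain H where H: "continuous_map (prod_topology Z unit_interval) X H"
    and Hq: "\<And>z t. z \<in> topspace Z \<Longrightarrow> t \<in> {0..1} \<Longrightarrow> p (H (z, t)) = q z"
    and Hfg: "\<And>z. z \<in> topspace Z \<Longrightarrow> H (z, 0) = f z \<and> H (z, 1) = g z"
    using assms(2) unfolding fw_homotopic_def by blast
  define \<sigma> where "\<sigma> z = (q z, restrict (\<lambda>t. H (z, t)) {0..1})" for z
  have "continuous_map Z (prod_topology B (path_fun_space X)) \<sigma>"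
    unfolding \<sigma>_def by (intro continuous_map_pairedI q continuous_map_path_curry H)
  moreover have "\<sigma> \<in> topspace Z \<rightarrow> {(b, \<alpha>). \<forall>t\<in>{0..1}. p (\<alpha> t) = b}"
    using Hq by (auto simp: \<sigma>_def)
  ultimately have "fw_map Z q (fw_path_space B X p) fst \<sigma>"
    unfolding fw_map_def fw_path_space_def continuous_map_in_subtopology by (simp add: \<sigma>_def)
  moreover have "fw_Pi (\<sigma> z) = (f z, g z)" if "z \<in> topspace Z" for z
    using Hfg[OF that] by (simp add: \<sigma>_def fw_Pi_def)
  ultimately show ?thesis
    using that by blast
qed

lemma fw_homotopic_path_endpoints:
  assumes "fw_map Z q (fw_path_space B X p) fst \<sigma>"
  shows "fw_homotopic Z q X p (\<lambda>z. snd (\<sigma> z) 0) (\<lambda>z. snd (\<sigma> z) 1)"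
proof -
  have \<sigma>: "continuous_map Z (fw_path_space B X p) \<sigma>" and \<sigma>q: "\<And>z. z \<in> topspace Z \<Longrightarrow> fst (\<sigma> z) = q z"
    using assms unfolding fw_map_def by auto
  have "continuous_map Z (path_fun_space X) (snd \<circ> \<sigma>)"
    using continuous_map_compose[OF \<sigma>[unfolded fw_path_space_def]
        continuous_map_from_subtopology[OF continuous_map_snd]] .
  then have "continuous_map (prod_topology Z unit_interval) (prod_topology (path_fun_space X) unit_interval)
               (\<lambda>(z, t). ((snd \<circ> \<sigma>) z, id t))"
    by (simp add: continuous_map_prod_top o_def)
  from continuous_map_compose[OF this continuous_map_path_eval]
  have "continuous_map (prod_topology Z unit_interval) X (\<lambda>(z, t). snd (\<sigma> z) t)"
    by (simp add: o_def case_prod_unfold)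
  moreover have "p (snd (\<sigma> z) t) = q z" if "z \<in> topspace Z" "t \<in> {0..1}" for z t
  proof -
    have "\<sigma> z \<in> topspace (fw_path_space B X p)"
      using continuous_map_funspace[OF \<sigma>] that(1) by (rule funcset_mem)
    then show ?thesis
      using \<sigma>q[OF that(1)] that(2) by (cases "\<sigma> z") (auto simp: topspace_fw_path_space)
  qed
  ultimately show ?thesis
    unfolding fw_homotopic_def by (intro exI[of _ "\<lambda>(z, t). snd (\<sigma> z) t"]) simp
qed

lemma INF_enat_eq_0_iff: "(INF k\<in>K. enat k) = 0 \<longleftrightarrow> 0 \<in> K"
proof
  assume "(INF k\<in>K. enat k) = 0"
  show "0 \<in> K"
  proof (rule ccontr)
    assume "0 \<notin> K"
    then have "1 \<le> (INF k\<in>K. enat k)"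
      by (auto intro!: INF_greatest simp: one_enat_def Suc_le_eq) (metis gr0I)
    with \<open>(INF k\<in>K. enat k) = 0\<close> show False
      by simp
  qed
qed (metis INF_lower le_zero_eq zero_enat_def)

lemma fw_secat_eq_0_iff:
  "fw_secat E pE X pX f = 0 \<longleftrightarrow> (\<exists>s. fw_map X pX E pE s \<and> fw_homotopic X pX X pX (f \<circ> s) id)"
proof -
  have "fw_secat E pE X pX f = 0 \<longleftrightarrow> (\<exists>U. fw_sectional E pE X pX f U \<and> topspace X \<subseteq> U)"
    unfolding fw_secat_def INF_enat_eq_0_iff by auto
  also have "\<dots> \<longleftrightarrow> fw_sectional E pE X pX f (topspace X)"
    unfolding fw_sectional_def by (metis openin_subset openin_topspace subset_antisym)
  finally show ?thesis
    by (simp add: fw_sectional_def)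
qed

lemma topspace_fw_fibre_product:
  "topspace (fw_fibre_product X p) = {(x, y). x \<in> topspace X \<and> y \<in> topspace X \<and> p x = p y}"
  by (auto simp: fw_fibre_product_def)

lemma fw_map_fibre_product_fst: "fw_map (fw_fibre_product X p) (p \<circ> fst) X p fst"
  unfolding fw_map_def fw_fibre_product_def
  by (simp add: continuous_map_from_subtopology continuous_map_fst)

lemma fw_map_fibre_product_snd: "fw_map (fw_fibre_product X p) (p \<circ> fst) X p snd"
  unfolding fw_map_def fw_fibre_product_def
  by (auto simp: continuous_map_from_subtopology continuous_map_snd)

lemma fw_TC_eq_0_iff_fw_homotopic_fst_snd:
  assumes p: "continuous_map X B p"
  shows "fw_TC B X p = 0 \<longleftrightarrow> fw_homotopic (fw_fibre_product X p) (p \<circ> fst) X p fst snd"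
    (is "_ \<longleftrightarrow> fw_homotopic ?F ?q X p fst snd")
proof
  assume "fw_TC B X p = 0"
  then obtain \<sigma> where \<sigma>: "fw_map ?F ?q (fw_path_space B X p) fst \<sigma>"
    and H: "fw_homotopic ?F ?q ?F ?q (fw_Pi \<circ> \<sigma>) id"
    unfolding fw_TC_def fw_secat_eq_0_iff by blast
  have "fw_homotopic ?F ?q X p fst (\<lambda>w. snd (\<sigma> w) 0)"
    using fw_homotopic_compose_left[OF fw_homotopic_sym[OF H] fw_map_fibre_product_fst]
    by (rule fw_homotopic_eq) (simp_all add: fw_Pi_def split_beta)
  also have "fw_homotopic ?F ?q X p (\<lambda>w. snd (\<sigma> w) 0) (\<lambda>w. snd (\<sigma> w) 1)"
    using \<sigma> by (rule fw_homotopic_path_endpoints)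
  also have "fw_homotopic ?F ?q X p (\<lambda>w. snd (\<sigma> w) 1) snd"
    using fw_homotopic_compose_left[OF H fw_map_fibre_product_snd]
    by (rule fw_homotopic_eq) (simp_all add: fw_Pi_def split_beta)
  finally show "fw_homotopic ?F ?q X p fst snd" .
next
  assume "fw_homotopic ?F ?q X p fst snd"
  moreover have "continuous_map ?F B ?q"
    using fw_map_fibre_product_fst p unfolding fw_map_def by (blast intro: continuous_map_compose)
  ultimately obtain \<sigma> where \<sigma>: "fw_map ?F ?q (fw_path_space B X p) fst \<sigma>"
    and \<Pi>\<sigma>: "\<And>w. w \<in> topspace ?F \<Longrightarrow> fw_Pi (\<sigma> w) = (fst w, snd w)"
    using fw_map_path_curry by blast
  have "fw_homotopic ?F ?q ?F ?q id (fw_Pi \<circ> \<sigma>)"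
    by (rule fw_homotopic_equal) (simp_all add: fw_map_def \<Pi>\<sigma>)
  then show "fw_TC B X p = 0"
    unfolding fw_TC_def fw_secat_eq_0_iff using \<sigma> fw_homotopic_sym by blast
qed

lemma fw_homotopic_fst_snd_if_fw_homotopy_equivalent_base:
  assumes "fw_homotopy_equivalent X p B id"
  shows "fw_homotopic (fw_fibre_product X p) (p \<circ> fst) X p fst snd"
    (is "fw_homotopic ?F ?q X p fst snd")
proof -
  obtain f g where f: "fw_map X p B id f" and gf: "fw_homotopic X p X p (g \<circ> f) id"
    using assms unfolding fw_homotopy_equivalent_def by blast
  have f_eq_p: "f x = p x" if "x \<in> topspace X" for x
    using f that by (simp add: fw_map_def)
  have "fw_homotopic ?F ?q X p fst (g \<circ> f \<circ> fst)"
    using fw_homotopic_sym[OF fw_homotopic_compose_right[OF gf fw_map_fibre_product_fst]]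
    by (rule fw_homotopic_eq) simp_all
  also have "fw_homotopic ?F ?q X p (g \<circ> f \<circ> fst) snd"
    using fw_homotopic_compose_right[OF gf fw_map_fibre_product_snd]
    by (rule fw_homotopic_eq) (auto simp: topspace_fw_fibre_product f_eq_p)
  finally show ?thesis .
qed

lemma fw_homotopy_equivalent_base_if_fw_homotopic_fst_snd:
  assumes "fw_pointed B X p s" and "fw_homotopic (fw_fibre_product X p) (p \<circ> fst) X p fst snd"
  shows "fw_homotopy_equivalent X p B id"
proof -
  have p: "continuous_map X B p" and s: "continuous_map B X s" and ps: "\<And>b. b \<in> topspace B \<Longrightarrow> p (s b) = b"
    using assms(1) unfolding fw_pointed_def by auto
  define z where "z x = (s (p x), x)" for x
  have "fw_map X p (fw_fibre_product X p) (p \<circ> fst) z"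
    unfolding fw_map_def fw_fibre_product_def continuous_map_in_subtopology z_def
    using p s ps continuous_map_image_subset_topspace[OF p]
    by (auto intro!: continuous_map_pairedI continuous_map_compose[OF p s, unfolded o_def])
  from fw_homotopic_compose_right[OF assms(2) this]
  have "fw_homotopic X p X p (s \<circ> p) id"
    by (rule fw_homotopic_eq) (simp_all add: z_def)
  moreover have "fw_homotopic B id B id (p \<circ> s) id"
    by (rule fw_homotopic_equal) (simp_all add: fw_map_def ps continuous_map_compose[OF s p])
  moreover have "fw_map X p B id p" "fw_map B id X p s"
    using p s ps by (simp_all add: fw_map_def)
  ultimately show ?thesis
    unfolding fw_homotopy_equivalent_def by blast
qed

theorem corollary2p7:
  fixes B :: "'b topology" and X :: "'a topology" and p :: "'a \<Rightarrow> 'b" and s :: "'b \<Rightarrow> 'a"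
  assumes "fw_pointed B X p s"
  shows "fw_TC B X p = 0 \<longleftrightarrow> fw_homotopy_equivalent X p B id"
proof -
  have "continuous_map X B p"
    using assms by (simp add: fw_pointed_def)
  then show ?thesis
    using fw_TC_eq_0_iff_fw_homotopic_fst_snd fw_homotopic_fst_snd_if_fw_homotopy_equivalent_base
      fw_homotopy_equivalent_base_if_fw_homotopic_fst_snd[OF assms] by blast
qed

end
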